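(* Let $d_x,d_y\in\mathbb N$, let $\mathcal K\subset\mathbb R^{d_x}$ be a compact domain (a compact set with nonempty interior), and let $p\in[1,\infty)$. For any set of activation functions, networks of width $d_y-1$ are dense neither in $L^p(\mathcal K,\mathbb{R}^{d_y})$ nor in $C(\mathcal K,\mathbb{R}^{d_y})$.
   Context: Given a set $\Sigma$ of activation functions $\mathbb R\to\mathbb R$, a network $f:\mathbb R^{d_x}\to\mathbb R^{d_y}$ is $t_L\circ\sigma_{L-1}\circ\cdots\circ\sigma_1\circ t_1$ with affine $t_\ell:\mathbb R^{d_{\ell-1}}\to\mathbb R^{d_\ell}$ ($d_0=d_x$, $d_L=d_y$) and $\sigma_\ell(x_1,\dots,x_{d_\ell})=(\rho_1(x_1),\dots,\rho_{d_\ell}(x_{d_\ell}))$ with $\rho_i\in\Sigma$; its width is $\max\{d_1,\dots,d_{L-1}\}$. $L^p(\mathcal K,\mathbb R^{d_y})$ carries the norm $(\int_{\mathcal K}\|f(x)\|_p^p dx)^{1/p}$ and $C(\mathcal K,\mathbb R^{d_y})$ the uniform norm $\sup_{x\in\mathcal K}\|f(x)\|_\infty$; density means every element can be approximated within any $\varepsilon>0$ in the respective norm by such networks. *)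

theory Defs
  imports "HOL-Analysis.Analysis"
begin

text \<open>Hidden-layer states are vectors of R^n represented as functions nat => real
  (components with index >= n are 0).  The input space is real^'x, the output space real^'y.\<close>

inductive nn_hidden ::
  "(real \<Rightarrow> real) set \<Rightarrow> nat \<Rightarrow> (real ^ 'x \<Rightarrow> nat \<Rightarrow> real) \<Rightarrow> nat \<Rightarrow> bool"
  for S :: "(real \<Rightarrow> real) set" and w :: nat where
  first: "\<lbrakk> n \<le> w; \<forall>i<n. \<rho> i \<in> S \<rbrakk> \<Longrightarrow>
     nn_hidden S w (\<lambda>x i. if i < n then \<rho> i ((\<Sum>j\<in>UNIV. W i j * x $ j) + b i) else 0) n"
| step: "\<lbrakk> nn_hidden S w g m; n \<le> w; \<forall>i<n. \<rho> i \<in> S \<rbrakk> \<Longrightarrow>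
     nn_hidden S w (\<lambda>x i. if i < n then \<rho> i ((\<Sum>j<m. W i j * g x j) + b i) else 0) n"

definition networks :: "(real \<Rightarrow> real) set \<Rightarrow> nat \<Rightarrow> (real ^ 'x \<Rightarrow> real ^ 'y) set" where
  "networks S w =
     {f. (\<exists>(A :: real ^ 'x ^ 'y) c. f = (\<lambda>x. A *v x + c))
       \<or> (\<exists>g m V c. nn_hidden S w g m \<and> f = (\<lambda>x. \<chi> k. (\<Sum>j<m. V k j * g x j) + c $ k))}"

definition lp_pow :: "real \<Rightarrow> real ^ 'y \<Rightarrow> real" where
  "lp_pow p v = (\<Sum>k\<in>UNIV. \<bar>v $ k\<bar> powr p)"

definition Lp_dist_pow :: "(real ^ 'x) set \<Rightarrow> real \<Rightarrow> (real ^ 'x \<Rightarrow> real ^ 'y)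
    \<Rightarrow> (real ^ 'x \<Rightarrow> real ^ 'y) \<Rightarrow> ennreal" where
  "Lp_dist_pow K p f g = (\<integral>\<^sup>+ x. ennreal (lp_pow p (f x - g x)) \<partial>(lebesgue_on K))"

definition in_Lp :: "(real ^ 'x) set \<Rightarrow> real \<Rightarrow> (real ^ 'x \<Rightarrow> real ^ 'y) \<Rightarrow> bool" where
  "in_Lp K p f \<longleftrightarrow> f \<in> borel_measurable (lebesgue_on K) \<and>
     (\<integral>\<^sup>+ x. ennreal (lp_pow p (f x)) \<partial>(lebesgue_on K)) < \<infinity>"

end

theory Submission
  imports Defs
begin

text \<open>A network of width below \<open>d\<^sub>y\<close> either has no hidden layer, and is then affine, or
  its output layer has fewer than \<open>d\<^sub>y\<close> columns, so that all its values lie in an affine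
  hyperplane \<open>u \<bullet> v = c\<close> with \<open>u \<noteq> 0\<close>. At three equally spaced points an affine map cannot
  come within \<open>1/(8 d\<^sub>y)\<close> of the bump \<open>0, l e\<^sub>a, 0\<close> when \<open>l \<ge> 1/2\<close>, and a hyperplane
  cannot come that close both to \<open>0\<close> and to every \<open>l e\<^sub>k\<close>. A continuous target that runs
  through this pattern at the equally spaced points \<open>y + j t\<close>, for every \<open>y\<close> in a small
  ball, therefore has sup-distance at least \<open>1/(8 d\<^sub>y)\<close> from every such network. For the
  \<open>L\<^sup>p\<close> bound: if the set where target and network are that far apart had small measure,
  finitely many of its translates could not cover the ball, and a point \<open>y\<close> outside all of
  them would contradict the previous statement.\<close>

lemma nn_hidden_dim_le: "nn_hidden S w g m \<Longrightarrow> m \<le> w"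
  by (induction rule: nn_hidden.induct) auto

lemma exists_orthogonal_to_columns:
  fixes W :: "'n::finite \<Rightarrow> nat \<Rightarrow> real"
  assumes "m < CARD('n)"
  obtains u :: "real^'n" where "u \<noteq> 0" "\<And>j. j < m \<Longrightarrow> (\<Sum>k\<in>UNIV. u $ k * W k j) = 0"
proof -
  define cols where "cols = (\<lambda>j. \<chi> k. W k j) ` {..<m}"
  have "dim cols \<le> card cols" by (rule dim_le_card) (auto simp: cols_def span_base)
  also have "\<dots> \<le> m" unfolding cols_def using card_image_le by fastforce
  finally have "dim cols < DIM(real^'n)" using assms by simp
  then obtain u :: "real^'n" where "u \<noteq> 0" and "\<And>v. v \<in> span cols \<Longrightarrow> orthogonal u v"
    using orthogonal_to_subspace_exists by blast
  moreover have "(\<Sum>k\<in>UNIV. u $ k * W k j) = u \<bullet> (\<chi> k. W k j)" for j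
    by (simp add: inner_vec_def)
  ultimately show thesis using that by (auto simp: cols_def orthogonal_def span_base)
qed

lemma narrow_network_affine_or_in_hyperplane:
  fixes g :: "real^'x \<Rightarrow> real^'y"
  assumes "g \<in> networks S (CARD('y) - 1)"
  shows "(\<exists>(A :: real^'x^'y) c. g = (\<lambda>x. A *v x + c)) \<or> (\<exists>u c. u \<noteq> 0 \<and> (\<forall>x. u \<bullet> g x = c))"
proof -
  have "\<exists>u c. u \<noteq> 0 \<and> (\<forall>x. u \<bullet> g x = c)"
    if h: "nn_hidden S (CARD('y) - 1) h m" and g: "g = (\<lambda>x. \<chi> k. (\<Sum>j<m. W k j * h x j) + c $ k)"
    for h m W c
  proof -
    have "m < CARD('y)"
      using nn_hidden_dim_le[OF h] zero_less_card_finite[where 'a='y] by linarith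
    then obtain u :: "real^'y" where u: "u \<noteq> 0" "\<And>j. j < m \<Longrightarrow> (\<Sum>k\<in>UNIV. u $ k * W k j) = 0"
      using exists_orthogonal_to_columns[of m W] by blast
    have "u \<bullet> g x = (\<Sum>j<m. (\<Sum>k\<in>UNIV. u $ k * W k j) * h x j) + u \<bullet> c" for x
      by (simp add: g inner_vec_def algebra_simps sum.distrib sum_distrib_left sum_distrib_right
          sum.swap[of _ UNIV "{..<m}"])
    with u show ?thesis by auto
  qed
  with assms show ?thesis unfolding networks_def by blast
qed

lemma abs_inner_le_sum_abs_mult_infnorm:
  fixes u v :: "real^'n"
  shows "\<bar>u \<bullet> v\<bar> \<le> (\<Sum>k\<in>UNIV. \<bar>u $ k\<bar>) * infnorm v"
proof -
  have "\<bar>u \<bullet> v\<bar> \<le> (\<Sum>k\<in>UNIV. \<bar>u $ k\<bar> * \<bar>v $ k\<bar>)"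
    unfolding inner_vec_def by (rule order_trans[OF sum_abs]) (simp add: abs_mult)
  also have "\<dots> \<le> (\<Sum>k\<in>UNIV. \<bar>u $ k\<bar> * infnorm v)"
    by (intro sum_mono mult_left_mono component_le_infnorm_cart) auto
  finally show ?thesis by (simp add: sum_distrib_right)
qed

lemma hyperplane_far_from_scaled_basis:
  fixes u v\<^sub>0 :: "real^'n" and v :: "'n \<Rightarrow> real^'n" and l \<epsilon> :: real
  assumes "u \<noteq> 0" and "u \<bullet> v\<^sub>0 = c" and "infnorm v\<^sub>0 \<le> \<epsilon>"
    and "\<And>k. u \<bullet> v k = c" and "\<And>k. infnorm (v k - l *\<^sub>R axis k 1) \<le> \<epsilon>"
  shows "\<bar>l\<bar> \<le> 2 * real CARD('n) * \<epsilon>"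
proof -
  define U where "U = (\<Sum>k\<in>UNIV. \<bar>u $ k\<bar>)"
  have "U > 0"
  proof -
    obtain k where "u $ k \<noteq> 0" using assms(1) by (metis vec_eq_iff zero_index)
    then have "0 < \<bar>u $ k\<bar>" by simp
    also have "\<bar>u $ k\<bar> \<le> U" unfolding U_def by (rule member_le_sum) auto
    finally show ?thesis .
  qed
  have c: "\<bar>c\<bar> \<le> U * \<epsilon>"
    using abs_inner_le_sum_abs_mult_infnorm[of u v\<^sub>0] assms(2,3) \<open>U > 0\<close>
    by (metis U_def mult_left_mono order.trans less_imp_le)
  have "\<bar>l\<bar> * \<bar>u $ k\<bar> \<le> 2 * U * \<epsilon>" for k
  proof -
    have "\<bar>c - l * u $ k\<bar> = \<bar>u \<bullet> (v k - l *\<^sub>R axis k 1)\<bar>"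
      using assms(4)[of k] by (simp add: inner_diff_right inner_axis)
    also have "\<dots> \<le> U * \<epsilon>"
      using abs_inner_le_sum_abs_mult_infnorm[of u] assms(5)[of k] \<open>U > 0\<close>
      by (metis U_def mult_left_mono order.trans less_imp_le)
    finally show ?thesis using c by (simp add: abs_mult[symmetric])
  qed
  then have "(\<Sum>k\<in>UNIV. \<bar>l\<bar> * \<bar>u $ k\<bar>) \<le> (\<Sum>k\<in>(UNIV::'n set). 2 * U * \<epsilon>)"
    by (intro sum_mono) auto
  then have "\<bar>l\<bar> * U \<le> (2 * real CARD('n) * \<epsilon>) * U"
    by (simp add: U_def sum_distrib_left sum_distrib_right mult.commute mult.left_commute)
  with \<open>U > 0\<close> show ?thesis by simp
qed

lemma affine_far_from_bump:
  fixes A :: "real^'m^'n"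
  assumes "infnorm (A *v z + c) \<le> \<epsilon>" and "infnorm (A *v (z + 2 *\<^sub>R t) + c) \<le> \<epsilon>"
    and "infnorm (A *v (z + t) + c - l *\<^sub>R axis a 1) \<le> \<epsilon>"
  shows "\<bar>l\<bar> \<le> 2 * \<epsilon>"
proof -
  define G where "G s = (A *v (z + s *\<^sub>R t) + c) $ a" for s
  have "G 0 + G 2 = 2 * G 1"
    by (simp add: G_def matrix_vector_right_distrib matrix_vector_mult_scaleR algebra_simps)
  moreover have "\<bar>G 0\<bar> \<le> \<epsilon>"
    using component_le_infnorm_cart[of "A *v z + c" a] assms(1) by (simp add: G_def)
  moreover have "\<bar>G 2\<bar> \<le> \<epsilon>"
    using component_le_infnorm_cart[of "A *v (z + 2 *\<^sub>R t) + c" a] assms(2) by (simp add: G_def)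
  moreover have "\<bar>G 1 - l\<bar> \<le> \<epsilon>"
    using component_le_infnorm_cart[of "A *v (z + t) + c - l *\<^sub>R axis a 1" a] assms(3)
    by (simp add: G_def)
  ultimately show ?thesis by linarith
qed

definition bump_pattern :: "'n::finite list \<Rightarrow> (real^'n) list" where
  "bump_pattern ks = 0 # axis (hd ks) 1 # 0 # map (\<lambda>k. axis k 1) ks"

lemma narrow_network_far_from_bump_pattern:
  fixes g :: "real^'x \<Rightarrow> real^'y"
  assumes g: "g \<in> networks S (CARD('y) - 1)" and ks: "set ks = UNIV" and l: "1/2 \<le> l"
  shows "\<exists>j<length (bump_pattern ks).
           1 / (8 * real CARD('y)) \<le> infnorm (l *\<^sub>R bump_pattern ks ! j - g (y + real j *\<^sub>R t))"
proof (rule ccontr)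
  define \<epsilon> :: real where "\<epsilon> = 1 / (8 * real CARD('y))"
  assume "\<not> ?thesis"
  then have close: "infnorm (g (y + real j *\<^sub>R t) - l *\<^sub>R bump_pattern ks ! j) \<le> \<epsilon>"
    if "j < length (bump_pattern ks)" for j
    using that infnorm_sub unfolding \<epsilon>_def by (metis linorder_not_le less_imp_le)
  have "\<bar>l\<bar> \<le> 2 * real CARD('y) * \<epsilon>"
    using narrow_network_affine_or_in_hyperplane[OF g]
  proof (elim disjE exE conjE)
    fix A c assume "g = (\<lambda>x. A *v x + c)"
    with close[of 0] close[of 1] close[of 2] have "\<bar>l\<bar> \<le> 2 * \<epsilon>"
      by (intro affine_far_from_bump[where z = y and t = t and a = "hd ks"])
        (simp_all add: bump_pattern_def)
    moreover have "2 * \<epsilon> \<le> 2 * real CARD('y) * \<epsilon>" by (simp add: \<epsilon>_def)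
    ultimately show ?thesis by linarith
  next
    fix u c assume u: "u \<noteq> 0" "\<forall>x. u \<bullet> g x = c"
    have "\<forall>k. \<exists>i. i < length ks \<and> ks ! i = k"
      using ks by (metis UNIV_I in_set_conv_nth)
    then obtain idx where idx: "\<And>k. idx k < length ks" "\<And>k. ks ! idx k = k" by metis
    show ?thesis
    proof (rule hyperplane_far_from_scaled_basis[OF u(1)])
      show "u \<bullet> g y = c" "\<And>k. u \<bullet> g (y + real (idx k + 3) *\<^sub>R t) = c" using u(2) by auto
      show "infnorm (g y) \<le> \<epsilon>" using close[of 0] by (simp add: bump_pattern_def)
      show "infnorm (g (y + real (idx k + 3) *\<^sub>R t) - l *\<^sub>R axis k 1) \<le> \<epsilon>" for k
        using close[of "idx k + 3"] idx[of k] by (simp add: bump_pattern_def)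
    qed
  qed
  moreover have "2 * real CARD('y) * \<epsilon> = 1/4" by (simp add: \<epsilon>_def)
  ultimately show False using l by linarith
qed

definition tent :: "real \<Rightarrow> real" where "tent s = max 0 (1 - 2 * \<bar>s\<bar>)"

definition tent_interp :: "'a::real_normed_vector list \<Rightarrow> real \<Rightarrow> 'a" where
  "tent_interp vs s = (\<Sum>i<length vs. tent (s - real i) *\<^sub>R vs ! i)"

lemma continuous_on_tent_interp [continuous_intros]:
  "continuous_on A f \<Longrightarrow> continuous_on A (\<lambda>x. tent_interp vs (f x))"
  unfolding tent_interp_def tent_def by (intro continuous_intros)

lemma tent_near_integer:
  assumes "\<bar>s\<bar> \<le> 1/4"
  shows "tent (real j + s - real i) = (if i = j then 1 - 2 * \<bar>s\<bar> else 0)"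
proof (cases "i = j")
  case False
  then have "1 \<le> \<bar>real j - real i\<bar>" by linarith
  then have "3/4 \<le> \<bar>real j + s - real i\<bar>" using assms by linarith
  with False show ?thesis by (simp add: tent_def)
qed (use assms in \<open>simp add: tent_def\<close>)

lemma tent_interp_near_node:
  assumes "\<bar>s\<bar> \<le> 1/4" and "j < length vs"
  shows "tent_interp vs (real j + s) = (1 - 2 * \<bar>s\<bar>) *\<^sub>R vs ! j"
proof -
  have "tent_interp vs (real j + s) = (\<Sum>i<length vs. if i = j then (1 - 2 * \<bar>s\<bar>) *\<^sub>R vs ! i else 0)"
    unfolding tent_interp_def by (rule sum.cong) (auto simp: tent_near_integer[OF assms(1)])
  also have "\<dots> = (1 - 2 * \<bar>s\<bar>) *\<^sub>R vs ! j" using assms(2) by (simp add: sum.delta')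
  finally show ?thesis .
qed

lemma tent_profile_through_ball:
  fixes x\<^sub>0 :: "'b::euclidean_space" and vs :: "'a::real_normed_vector list"
  assumes "0 < R"
  obtains f :: "'b \<Rightarrow> 'a" and t r l where "continuous_on UNIV f" and "0 < r"
    and "\<And>y j. y \<in> ball x\<^sub>0 r \<Longrightarrow> j < length vs \<Longrightarrow> y + real j *\<^sub>R t \<in> ball x\<^sub>0 R"
    and "\<And>y j. y \<in> ball x\<^sub>0 r \<Longrightarrow> j < length vs \<Longrightarrow> f (y + real j *\<^sub>R t) = l y *\<^sub>R vs ! j"
    and "\<And>y. y \<in> ball x\<^sub>0 r \<Longrightarrow> 1/2 \<le> l y"
proof -
  obtain e :: 'b where e: "norm e = 1" using vector_choose_size[of 1] by auto
  define h where "h = R / (real (length vs) + 1)"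
  have "0 < h" using assms by (simp add: h_def)
  define \<sigma> where "\<sigma> y = ((y - x\<^sub>0) \<bullet> e) / h" for y
  have \<sigma>_small: "\<bar>\<sigma> y\<bar> \<le> 1/4" if "y \<in> ball x\<^sub>0 (h/4)" for y
  proof -
    have "\<bar>(y - x\<^sub>0) \<bullet> e\<bar> \<le> norm (y - x\<^sub>0)" using Cauchy_Schwarz_ineq2[of "y - x\<^sub>0" e] e by simp
    also have "\<dots> < h / 4" using that by (simp add: dist_norm norm_minus_commute)
    finally show ?thesis using \<open>0 < h\<close> by (simp add: \<sigma>_def abs_divide divide_le_eq)
  qed
  have \<sigma>_shift: "\<sigma> (y + real j *\<^sub>R (h *\<^sub>R e)) = real j + \<sigma> y" for y j
    using \<open>0 < h\<close> e by (simp add: \<sigma>_def inner_add_left inner_diff_left field_simps dot_square_norm)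
  show thesis
  proof (rule that[of "\<lambda>y. tent_interp vs (\<sigma> y)" "h/4" "h *\<^sub>R e" "\<lambda>y. 1 - 2 * \<bar>\<sigma> y\<bar>"])
    show "continuous_on UNIV (\<lambda>y. tent_interp vs (\<sigma> y))"
      unfolding \<sigma>_def by (intro continuous_intros) (use \<open>0 < h\<close> in auto)
    show "0 < h / 4" using \<open>0 < h\<close> by simp
    fix y assume y: "y \<in> ball x\<^sub>0 (h/4)"
    show "1/2 \<le> 1 - 2 * \<bar>\<sigma> y\<bar>" using \<sigma>_small[OF y] by linarith
    fix j assume j: "j < length vs"
    show "tent_interp vs (\<sigma> (y + real j *\<^sub>R (h *\<^sub>R e))) = (1 - 2 * \<bar>\<sigma> y\<bar>) *\<^sub>R vs ! j"
      unfolding \<sigma>_shift by (rule tent_interp_near_node[OF \<sigma>_small[OF y] j])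
    have "dist x\<^sub>0 (y + real j *\<^sub>R (h *\<^sub>R e)) \<le> dist x\<^sub>0 y + real j * h"
      using \<open>0 < h\<close> e dist_triangle[of x\<^sub>0 "y + real j *\<^sub>R (h *\<^sub>R e)" y] by (simp add: dist_norm)
    also have "\<dots> < (real j + 1) * h" using y \<open>0 < h\<close> by (simp add: algebra_simps)
    also have "\<dots> \<le> R" using j \<open>0 < h\<close> assms by (simp add: h_def field_simps)
    finally show "y + real j *\<^sub>R (h *\<^sub>R e) \<in> ball x\<^sub>0 R" by simp
  qed
qed

lemma infnorm_powr_le_lp_pow:
  fixes v :: "real^'n"
  assumes "0 \<le> p"
  shows "infnorm v powr p \<le> lp_pow p v"
proof -
  have "infnorm v \<in> (\<lambda>i. \<bar>v \<bullet> i\<bar>) ` Basis" unfolding infnorm_Max by (rule Max_in) auto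
  then obtain k where "infnorm v = \<bar>v $ k\<bar>" by (auto simp: Basis_vec_def inner_axis)
  then show ?thesis unfolding lp_pow_def by (auto intro: member_le_sum)
qed

lemma continuous_imp_in_Lp:
  fixes f :: "real^'x \<Rightarrow> real^'y"
  assumes "compact K" and "continuous_on K f" and "0 \<le> p"
  shows "in_Lp K p f"
proof -
  have K: "K \<in> sets lebesgue" "emeasure lebesgue K < \<infinity>"
    using lmeasurable_compact[OF assms(1)] by (auto simp: fmeasurable_def)
  obtain B where B: "\<And>x. x \<in> K \<Longrightarrow> norm (f x) \<le> B"
    using compact_imp_bounded[OF compact_continuous_image[OF assms(2,1)]] by (auto simp: bounded_iff)
  have bound: "lp_pow p (f x) \<le> CARD('y) * B powr p" if "x \<in> K" for x
  proof -
    have "(\<Sum>k\<in>UNIV. \<bar>f x $ k\<bar> powr p) \<le> (\<Sum>k\<in>(UNIV::'y set). B powr p)"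
      by (intro sum_mono powr_mono2 order_trans[OF component_le_norm_cart B[OF that]])
        (use assms(3) in auto)
    then show ?thesis by (simp add: lp_pow_def)
  qed
  have "(\<integral>\<^sup>+ x. ennreal (lp_pow p (f x)) \<partial>lebesgue_on K)
      \<le> (\<integral>\<^sup>+ x. ennreal (CARD('y) * B powr p) \<partial>lebesgue_on K)"
    by (intro nn_integral_mono ennreal_leI) (simp add: bound)
  also have "\<dots> = ennreal (CARD('y) * B powr p) * emeasure lebesgue K"
    using K(1) by (simp add: emeasure_restrict_space)
  also have "\<dots> < \<infinity>" using K(2) by (simp add: ennreal_mult_less_top)
  finally show ?thesis
    unfolding in_Lp_def using continuous_imp_measurable_on_sets_lebesgue[OF assms(2) K(1)] by simp
qed

lemma Lp_dist_pow_ge_measure_of_far_set: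
  fixes f g :: "real^'x \<Rightarrow> real^'y"
  assumes "compact K" and "f \<in> borel_measurable (lebesgue_on K)" and "g \<in> borel_measurable (lebesgue_on K)"
    and "0 \<le> \<eta>" and "0 \<le> p"
  defines "F \<equiv> {x \<in> K. \<eta> \<le> infnorm (f x - g x)}"
  shows "F \<in> lmeasurable" and "ennreal (\<eta> powr p * measure lebesgue F) \<le> Lp_dist_pow K p f g"
proof -
  have K: "K \<in> sets lebesgue" using lmeasurable_compact[OF assms(1)] by (simp add: fmeasurable_def)
  have "(\<lambda>x. f x - g x) \<in> borel_measurable (lebesgue_on K)" using assms(2,3) by measurable
  moreover have "infnorm \<in> borel_measurable (borel :: (real^'y) measure)"
    by (intro borel_measurable_continuous_onI continuous_intros)
  ultimately have "(\<lambda>x. infnorm (f x - g x)) \<in> borel_measurable (lebesgue_on K)"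
    by (rule measurable_compose)
  then have "{x \<in> space (lebesgue_on K). \<eta> \<le> infnorm (f x - g x)} \<in> sets (lebesgue_on K)"
    by measurable
  then have F_sets: "F \<in> sets (lebesgue_on K)" by (simp add: F_def)
  then have "F \<in> sets lebesgue" using K by (simp add: sets_restrict_space_iff)
  moreover have "bounded F" using compact_imp_bounded[OF assms(1)] by (rule bounded_subset) (auto simp: F_def)
  ultimately show F: "F \<in> lmeasurable" by (rule bounded_set_imp_lmeasurable[rotated])
  have "(\<integral>\<^sup>+ x. ennreal (\<eta> powr p) * indicator F x \<partial>lebesgue_on K) \<le> Lp_dist_pow K p f g"
    unfolding Lp_dist_pow_def
  proof (intro nn_integral_mono)
    fix x
    have "\<eta> powr p \<le> lp_pow p (f x - g x)" if "x \<in> F"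
      using that assms(4,5) by (intro order_trans[OF powr_mono2 infnorm_powr_le_lp_pow]) (auto simp: F_def)
    then show "ennreal (\<eta> powr p) * indicator F x \<le> ennreal (lp_pow p (f x - g x))"
      by (cases "x \<in> F") (auto intro: ennreal_leI)
  qed
  also have "(\<integral>\<^sup>+ x. ennreal (\<eta> powr p) * indicator F x \<partial>lebesgue_on K) = ennreal (\<eta> powr p) * emeasure lebesgue F"
    using F_sets K by (simp add: nn_integral_cmult_indicator emeasure_restrict_space F_def)
  finally show "ennreal (\<eta> powr p * measure lebesgue F) \<le> Lp_dist_pow K p f g"
    using F by (simp add: emeasure_eq_measure2 ennreal_mult')
qed

lemma exists_point_avoiding_translates:
  fixes A B :: "'a::euclidean_space set"
  assumes "A \<in> lmeasurable" and "B \<in> lmeasurable" and "finite J"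
    and "real (card J) * measure lebesgue B < measure lebesgue A"
  obtains y where "y \<in> A" and "\<And>j. j \<in> J \<Longrightarrow> y + \<tau> j \<notin> B"
proof -
  define Y where "Y j = (\<lambda>x. x - \<tau> j) ` B" for j
  have Y: "Y j \<in> lmeasurable" "measure lebesgue (Y j) = measure lebesgue B" for j
    unfolding Y_def using assms(2) by (auto intro: measurable_translation_subtract measure_translation_subtract)
  have "measure lebesgue (\<Union>j\<in>J. Y j) \<le> (\<Sum>j\<in>J. measure lebesgue (Y j))"
    using assms(3) Y(1) by (intro measure_UNION_le) auto
  also have "\<dots> < measure lebesgue A" using assms(4) by (simp add: Y(2))
  finally have "\<not> A \<subseteq> (\<Union>j\<in>J. Y j)"
    using assms(1,3) Y(1) measure_mono_fmeasurable[of A "\<Union>j\<in>J. Y j" lebesgue]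
    by (auto intro: fmeasurable.finite_UN)
  then show thesis using that by (force simp: Y_def)
qed

lemma Lp_dist_pow_uniformly_positive_if_far_on_translates:
  fixes f :: "real^'x \<Rightarrow> real^'y" and \<tau> :: "'j \<Rightarrow> real^'x"
  assumes "compact K" and "0 < p" and "f \<in> borel_measurable (lebesgue_on K)"
    and "0 < r" and "0 < \<eta>" and "finite J"
    and far: "\<And>g y. g \<in> G \<Longrightarrow> y \<in> ball x\<^sub>0 r \<Longrightarrow>
                \<exists>j\<in>J. y + \<tau> j \<in> K \<and> \<eta> \<le> infnorm (f (y + \<tau> j) - g (y + \<tau> j))"
  obtains \<epsilon> where "0 < \<epsilon>"
    and "\<And>g. g \<in> G \<Longrightarrow> g \<in> borel_measurable (lebesgue_on K) \<Longrightarrow> ennreal (\<epsilon> powr p) \<le> Lp_dist_pow K p f g"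
proof -
  define m where "m = measure lebesgue (ball x\<^sub>0 r)"
  have "0 < m" using content_ball_pos[OF assms(4)] by (simp add: m_def measure_completion)
  define X where "X = \<eta> powr p * m / (real (card J) + 1)"
  have "0 < X" using \<open>0 < m\<close> assms(5) by (simp add: X_def)
  show thesis
  proof (rule that)
    show "0 < X powr (1/p)" using \<open>0 < X\<close> by simp
    fix g assume g: "g \<in> G" "g \<in> borel_measurable (lebesgue_on K)"
    define F where "F = {x \<in> K. \<eta> \<le> infnorm (f x - g x)}"
    note F = Lp_dist_pow_ge_measure_of_far_set[OF assms(1,3) g(2), of \<eta> p, folded F_def]
    have "m \<le> real (card J) * measure lebesgue F"
    proof (rule ccontr)
      assume "\<not> ?thesis"
      then obtain y where "y \<in> ball x\<^sub>0 r" "\<And>j. j \<in> J \<Longrightarrow> y + \<tau> j \<notin> F"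
        using exists_point_avoiding_translates[of "ball x\<^sub>0 r" F J \<tau>] F(1) assms(2,5,6)
        by (auto simp: m_def)
      with far[OF g(1)] show False by (force simp: F_def)
    qed
    then have mF: "m / (real (card J) + 1) \<le> measure lebesgue F"
      by (simp add: divide_le_eq algebra_simps) (use measure_nonneg[of lebesgue F] in linarith)
    have "X \<le> \<eta> powr p * measure lebesgue F"
      unfolding X_def using mult_left_mono[OF mF, of "\<eta> powr p"] by simp
    then show "ennreal ((X powr (1/p)) powr p) \<le> Lp_dist_pow K p f g"
      using F(2) assms(2,5) \<open>0 < X\<close> by (simp add: powr_powr) (metis ennreal_leI order_trans)
  qed
qed

lemma exists_continuous_far_from_narrow_networks:
  fixes x\<^sub>0 :: "real^'x"
  assumes "0 < R" and "ball x\<^sub>0 R \<subseteq> K"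
  obtains f :: "real^'x \<Rightarrow> real^'y" and t r n where "continuous_on UNIV f" and "0 < r"
    and "\<And>g y. g \<in> networks S (CARD('y) - 1) \<Longrightarrow> y \<in> ball x\<^sub>0 r \<Longrightarrow>
           \<exists>j\<in>{..<n}. y + real j *\<^sub>R t \<in> K \<and>
             1 / (8 * real CARD('y)) \<le> infnorm (f (y + real j *\<^sub>R t) - g (y + real j *\<^sub>R t))"
proof -
  obtain ks :: "'y list" where ks: "set ks = UNIV" using finite_list[of "UNIV :: 'y set"] by auto
  obtain f :: "real^'x \<Rightarrow> real^'y" and t r l where f: "continuous_on UNIV f" and "0 < r"
    and on_ball: "\<And>y j. y \<in> ball x\<^sub>0 r \<Longrightarrow> j < length (bump_pattern ks) \<Longrightarrow>
        y + real j *\<^sub>R t \<in> ball x\<^sub>0 R \<and> f (y + real j *\<^sub>R t) = l y *\<^sub>R bump_pattern ks ! j"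
    and l: "\<And>y. y \<in> ball x\<^sub>0 r \<Longrightarrow> 1/2 \<le> l y"
    using tent_profile_through_ball[OF assms(1), of x\<^sub>0 "bump_pattern ks"] by metis
  show thesis
  proof (rule that[OF f \<open>0 < r\<close>])
    fix g :: "real^'x \<Rightarrow> real^'y" and y
    assume g: "g \<in> networks S (CARD('y) - 1)" and y: "y \<in> ball x\<^sub>0 r"
    obtain j where j: "j < length (bump_pattern ks)"
      "1 / (8 * real CARD('y)) \<le> infnorm (l y *\<^sub>R bump_pattern ks ! j - g (y + real j *\<^sub>R t))"
      using narrow_network_far_from_bump_pattern[OF g ks l[OF y], of y t] by blast
    then show "\<exists>j\<in>{..<length (bump_pattern ks)}. y + real j *\<^sub>R t \<in> K \<and>
        1 / (8 * real CARD('y)) \<le> infnorm (f (y + real j *\<^sub>R t) - g (y + real j *\<^sub>R t))"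
      using on_ball[OF y j(1)] assms(2) by (intro bexI[of _ j]) auto
  qed
qed

theorem lemma14:
  fixes K :: "(real ^ 'x) set" and S :: "(real \<Rightarrow> real) set" and p :: real
  assumes "compact K" and "interior K \<noteq> {}" and "1 \<le> p"
  shows "(\<exists>(f :: real ^ 'x \<Rightarrow> real ^ 'y) \<epsilon>. in_Lp K p f \<and> \<epsilon> > 0 \<and>
            (\<forall>g \<in> networks S (CARD('y) - 1). g \<in> borel_measurable (lebesgue_on K) \<longrightarrow>
               Lp_dist_pow K p f g \<ge> ennreal (\<epsilon> powr p)))
       \<and> (\<exists>(f :: real ^ 'x \<Rightarrow> real ^ 'y) \<epsilon>. continuous_on K f \<and> \<epsilon> > 0 \<and>
            (\<forall>g \<in> networks S (CARD('y) - 1). \<exists>x\<in>K. infnorm (f x - g x) \<ge> \<epsilon>))"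
proof -
  obtain x\<^sub>0 R where "0 < R" and "ball x\<^sub>0 R \<subseteq> K"
    using assms(2) by (metis all_not_in_conv interior_subset mem_interior subset_trans)
  then obtain f :: "real^'x \<Rightarrow> real^'y" and t r n where "continuous_on UNIV f" and "0 < r"
    and far: "\<And>g y. g \<in> networks S (CARD('y) - 1) \<Longrightarrow> y \<in> ball x\<^sub>0 r \<Longrightarrow>
           \<exists>j\<in>{..<n}. y + real j *\<^sub>R t \<in> K \<and>
             1 / (8 * real CARD('y)) \<le> infnorm (f (y + real j *\<^sub>R t) - g (y + real j *\<^sub>R t))"
    by (rule exists_continuous_far_from_narrow_networks[where S = S]) blast
  then have fK: "continuous_on K f" by (metis continuous_on_subset subset_UNIV)
  then have "in_Lp K p f" using assms(1,3) by (intro continuous_imp_in_Lp) auto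
  moreover have "f \<in> borel_measurable (lebesgue_on K)" and "0 < p"
    using \<open>in_Lp K p f\<close> assms(3) by (auto simp: in_Lp_def)
  then obtain \<epsilon> where "0 < \<epsilon>" and "\<And>g. g \<in> networks S (CARD('y) - 1) \<Longrightarrow>
      g \<in> borel_measurable (lebesgue_on K) \<Longrightarrow> ennreal (\<epsilon> powr p) \<le> Lp_dist_pow K p f g"
    using Lp_dist_pow_uniformly_positive_if_far_on_translates[where \<tau> = "\<lambda>j. real j *\<^sub>R t"
        and G = "networks S (CARD('y) - 1)" and x\<^sub>0 = x\<^sub>0, OF assms(1) _ _ \<open>0 < r\<close> _ finite_lessThan far]
    by auto
  moreover have "\<exists>x\<in>K. 1 / (8 * real CARD('y)) \<le> infnorm (f x - g x)"
    if "g \<in> networks S (CARD('y) - 1)" for g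
    using far[OF that, of x\<^sub>0] \<open>0 < r\<close> by auto
  moreover have "0 < 1 / (8 * real CARD('y))" by simp
  ultimately show ?thesis using fK by blast
qed

end
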